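(* Let $n\ge 3$ and let $S$ be a $4$-cap free, $n$-cup free configuration of size at least $\binom{n-1}{2}+1$. Let $L(S)$ be the set of starting points of all $(n-1)$-cups in $S$, $R(S)$ the set of ending points of all $(n-1)$-cups in $S$, $p_S$ the largest element of $L(S)$ and $q_S$ the smallest element of $R(S)$. Then $p_S \leq q_S$.
   Context: A configuration is a finite set $S$ of points with a linear order $<$ and, for every $3$-element subset, an arbitrary assignment declaring it either a cap or a cup. Points $x_1<\cdots<x_a$ form an $a$-cup (resp. $a$-cap) if every consecutive triple $\{x_{i-1},x_i,x_{i+1}\}$, $1<i<a$, is assigned cup (resp. cap); $1$- and $2$-element sets are both caps and cups. A cup $x_1\cdots x_a$ starts with $x_1$ and ends with $x_a$. (Under the hypotheses, $S$ contains at least one $(n-1)$-cup, so $L(S)$ and $R(S)$ are nonempty.) *)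

theory Defs
  imports Main
begin

(* A configuration: a finite set S of a linearly ordered type, together with
   a labelling T of 3-element subsets. For x < y < z, T x y z = True means
   {x,y,z} is a cup, T x y z = False means it is a cap. *)

definition is_cup :: "('a::linorder \<Rightarrow> 'a \<Rightarrow> 'a \<Rightarrow> bool) \<Rightarrow> 'a set \<Rightarrow> 'a list \<Rightarrow> bool" where
  "is_cup T S xs \<longleftrightarrow> sorted_wrt (<) xs \<and> set xs \<subseteq> S \<and>
     (\<forall>i. 0 < i \<and> i + 1 < length xs \<longrightarrow> T (xs ! (i - 1)) (xs ! i) (xs ! (i + 1)))"

definition is_cap :: "('a::linorder \<Rightarrow> 'a \<Rightarrow> 'a \<Rightarrow> bool) \<Rightarrow> 'a set \<Rightarrow> 'a list \<Rightarrow> bool" where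
  "is_cap T S xs \<longleftrightarrow> sorted_wrt (<) xs \<and> set xs \<subseteq> S \<and>
     (\<forall>i. 0 < i \<and> i + 1 < length xs \<longrightarrow> \<not> T (xs ! (i - 1)) (xs ! i) (xs ! (i + 1)))"

definition cup_starts :: "('a::linorder \<Rightarrow> 'a \<Rightarrow> 'a \<Rightarrow> bool) \<Rightarrow> 'a set \<Rightarrow> nat \<Rightarrow> 'a set" where
  "cup_starts T S k = {hd xs | xs. is_cup T S xs \<and> length xs = k}"

definition cup_ends :: "('a::linorder \<Rightarrow> 'a \<Rightarrow> 'a \<Rightarrow> bool) \<Rightarrow> 'a set \<Rightarrow> nat \<Rightarrow> 'a set" where
  "cup_ends T S k = {last xs | xs. is_cup T S xs \<and> length xs = k}"

end

theory Submission
  imports Defs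
begin

text \<open>If an \<open>(n-1)\<close>-cup ended strictly before another one starts, look at the last two points
  \<open>a < b\<close> of the first and the first two points \<open>c < d\<close> of the second. Neither cup can be
  extended by the endpoint of the other, since \<open>S\<close> has no \<open>n\<close>-cup, so \<open>{a,b,c}\<close> and
  \<open>{b,c,d}\<close> are both caps and \<open>a b c d\<close> is a 4-cap.\<close>

lemma is_cup_snoc:
  assumes cup: "is_cup T S (xs @ [a, b])" and "c \<in> S" "b < c" "T a b c"
  shows "is_cup T S (xs @ [a, b, c])"
proof -
  let ?B = "xs @ [a, b]"
  have "sorted_wrt (<) ?B"
    using cup unfolding is_cup_def by auto
  then have sorted: "sorted_wrt (<) (?B @ [c])"
    using \<open>b < c\<close> by (auto simp: sorted_wrt_append)
  have "T ((?B @ [c]) ! (i - 1)) ((?B @ [c]) ! i) ((?B @ [c]) ! (i + 1))"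
    if "0 < i" "i + 1 < length (?B @ [c])" for i
  proof (cases "i = length xs + 1")
    case True
    then show ?thesis using \<open>T a b c\<close> by (simp add: nth_append)
  next
    case False
    then have "i + 1 < length ?B" using that by simp
    moreover have "T (?B ! (i - 1)) (?B ! i) (?B ! (i + 1))"
      using cup \<open>0 < i\<close> calculation unfolding is_cup_def by blast
    moreover have "(?B @ [c]) ! j = ?B ! j" if "j < length ?B" for j
      using that by (rule nth_append_left)
    ultimately show ?thesis by (metis add_lessD1 less_imp_diff_less)
  qed
  with sorted show ?thesis
    using cup \<open>c \<in> S\<close> unfolding is_cup_def by auto
qed

lemma is_cup_Cons:
  assumes cup: "is_cup T S (b # c # ys)" and "a \<in> S" "a < b" "T a b c"
  shows "is_cup T S (a # b # c # ys)"
proof -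
  have "sorted_wrt (<) (b # c # ys)"
    using cup unfolding is_cup_def by auto
  then have sorted: "sorted_wrt (<) (a # b # c # ys)"
    using \<open>a < b\<close> by auto
  have "T ((a # b # c # ys) ! (i - 1)) ((a # b # c # ys) ! i) ((a # b # c # ys) ! (i + 1))"
    if "0 < i" "i + 1 < length (a # b # c # ys)" for i
  proof (cases "i = 1")
    case True
    then show ?thesis using \<open>T a b c\<close> by simp
  next
    case False
    let ?B = "b # c # ys"
    have "0 < i - 1" "i - 1 + 1 < length ?B"
      using that False by auto
    then have "T (?B ! (i - 1 - 1)) (?B ! (i - 1)) (?B ! (i - 1 + 1))"
      using cup unfolding is_cup_def by blast
    then show ?thesis using \<open>0 < i - 1\<close> by (simp add: nth_Cons')
  qed
  with sorted show ?thesis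
    using cup \<open>a \<in> S\<close> unfolding is_cup_def by auto
qed

lemma cup_before_cup_extends_or_cap4:
  assumes left: "is_cup T S (xs @ [a, b])" and right: "is_cup T S (c # d # ys)" and "b < c"
  shows "is_cup T S (xs @ [a, b, c]) \<or> is_cup T S (b # c # d # ys) \<or> is_cap T S [a, b, c, d]"
proof -
  have "a < b" "a \<in> S" "b \<in> S"
    using left unfolding is_cup_def by (auto simp: sorted_wrt_append)
  moreover have "c < d" "c \<in> S" "d \<in> S"
    using right unfolding is_cup_def by auto
  moreover have "is_cap T S [a, b, c, d]" if "\<not> T a b c" "\<not> T b c d"
    unfolding is_cap_def
  proof (intro conjI allI impI)
    fix i :: nat assume "0 < i \<and> i + 1 < length [a, b, c, d]"
    then have "i = 1 \<or> i = 2" by auto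
    then show "\<not> T ([a, b, c, d] ! (i - 1)) ([a, b, c, d] ! i) ([a, b, c, d] ! (i + 1))"
      using that by auto
  qed (use calculation \<open>b < c\<close> in auto)
  ultimately show ?thesis
    using is_cup_snoc[OF left] is_cup_Cons[OF right] \<open>b < c\<close> by blast
qed

lemma cup_starts_subset: "0 < k \<Longrightarrow> cup_starts T S k \<subseteq> S"
  unfolding cup_starts_def is_cup_def by (auto intro: hd_in_set)

lemma cup_ends_subset: "0 < k \<Longrightarrow> cup_ends T S k \<subseteq> S"
  unfolding cup_ends_def is_cup_def by (auto intro: last_in_set)

lemma cup_starts_empty_iff: "cup_starts T S k = {} \<longleftrightarrow> cup_ends T S k = {}"
  unfolding cup_starts_def cup_ends_def by auto

lemma Max_empty_eq_Min_empty: "Max {} = (Min {} :: 'a::linorder)"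
  by (simp add: Max.eq_fold' Min.eq_fold')

lemma cup_start_le_cup_end:
  assumes no_cap4: "\<nexists>xs. is_cap T S xs \<and> length xs = 4"
    and no_longer_cup: "\<nexists>xs. is_cup T S xs \<and> length xs = Suc k"
    and A: "is_cup T S A" "length A = k" and B: "is_cup T S B" "length B = k" and "2 \<le> k"
  shows "hd A \<le> last B"
proof (rule ccontr)
  assume "\<not> hd A \<le> last B"
  obtain c d ys where A_eq: "A = c # d # ys"
    using A(2) \<open>2 \<le> k\<close> by (cases A rule: remdups_adj.cases) auto
  obtain b a zs where "rev B = b # a # zs"
    using B(2) \<open>2 \<le> k\<close> length_rev[of B] by (cases "rev B" rule: remdups_adj.cases) auto
  then have B_eq: "B = rev zs @ [a, b]"
    by simp
  have "b < c"
    using \<open>\<not> hd A \<le> last B\<close> unfolding A_eq B_eq by simp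
  then have "is_cup T S (rev zs @ [a, b, c]) \<or> is_cup T S (b # c # d # ys) \<or> is_cap T S [a, b, c, d]"
    using cup_before_cup_extends_or_cap4 A(1) B(1) unfolding A_eq B_eq by blast
  moreover have "length (rev zs @ [a, b, c]) = Suc k" "length (b # c # d # ys) = Suc k"
    using A(2) B(2) unfolding A_eq B_eq by auto
  moreover have "length [a, b, c, d] = 4" by simp
  ultimately show False
    using no_cap4 no_longer_cup by blast
qed

theorem lemma5p6:
  fixes S :: "'a::linorder set" and T :: "'a \<Rightarrow> 'a \<Rightarrow> 'a \<Rightarrow> bool" and n :: nat
  assumes "n \<ge> 3"
    and "finite S"
    and "\<not> (\<exists>xs. is_cap T S xs \<and> length xs = 4)"
    and "\<not> (\<exists>xs. is_cup T S xs \<and> length xs = n)"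
    and "card S \<ge> ((n - 1) choose 2) + 1"
  shows "Max (cup_starts T S (n - 1)) \<le> Min (cup_ends T S (n - 1))"
proof (cases "cup_starts T S (n - 1) = {}")
  case True
  \<comment> \<open>The size bound only serves to make \<open>L(S)\<close> nonempty; without it both sets are empty
    and \<open>Max {}\<close>, \<open>Min {}\<close> are the same unspecified value.\<close>
  moreover from True have "cup_ends T S (n - 1) = {}"
    by (simp only: cup_starts_empty_iff)
  ultimately show ?thesis by (simp only: Max_empty_eq_Min_empty order.refl)
next
  case False
  let ?L = "cup_starts T S (n - 1)" and ?R = "cup_ends T S (n - 1)"
  have "0 < n - 1" using \<open>n \<ge> 3\<close> by simp
  then have "finite ?L" "finite ?R"
    using cup_starts_subset cup_ends_subset \<open>finite S\<close> by (metis finite_subset)+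
  moreover have "?R \<noteq> {}" using False by (simp add: cup_starts_empty_iff)
  ultimately obtain A B where A: "is_cup T S A" "length A = n - 1" "hd A = Max ?L"
    and B: "is_cup T S B" "length B = n - 1" "last B = Min ?R"
    using Max_in[of ?L] Min_in[of ?R] False unfolding cup_starts_def cup_ends_def by auto
  have "Suc (n - 1) = n" "2 \<le> n - 1" using \<open>n \<ge> 3\<close> by auto
  then show ?thesis
    using cup_start_le_cup_end[of T S "n - 1" A B] A B assms(3,4) by simp
qed

end
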